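(* For every $n \ge 1$, the $\mathbb{Z}$-discriminating complexity of $\mathbb{Z}^n$ is asymptotically equivalent to a polynomial of degree $n-1$, i.e. $C_{\mathbb{Z}^n}^{\mathbb{Z}} \approx (R \mapsto R^{n-1})$.
   Context: A group $G$ is fully residually $H$ if for every finite set $S \subseteq G-\{1\}$ there is a homomorphism $\phi: G \to H$ with $1 \notin \phi(S)$ ($\phi$ discriminates $S$). For finite generating sets $X$ of $G$ and $Y$ of $H$, the complexity of $\phi: G\to H$ is $|\phi|_X^Y := \max_{x \in X} |\phi(x)|_Y$. The $H$-discriminating complexity is $C_{G,X}^{H,Y}(R) := \min\{|\phi|_X^Y : \phi \text{ discriminates } B_R(G,X)-\{1\}\}$, $B_R(G,X)$ being the closed ball of radius $R$ about $1$ in the word metric. For $f,g:\mathbb{N}\to\mathbb{N}$, $f \preceq g$ means there is $K$ with $f(R) \le K g(KR)+K$ for all $R$, and $f\approx g$ means $f \preceq g$ and $g\preceq f$. The $\approx$-class of $C_{G,X}^{H,Y}$ is independent of $X,Y$ and is denoted $C_G^H$. *)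

theory Defs
  imports Main
begin

text \<open>The free abelian group Z^n, realised as integer vectors indexed by {0..<n}
  (functions nat => int vanishing outside {..<n}), with group operation +.\<close>
definition Zn :: "nat \<Rightarrow> (nat \<Rightarrow> int) set" where
  "Zn n = {v. \<forall>i\<ge>n. v i = 0}"

definition std_basis :: "nat \<Rightarrow> nat \<Rightarrow> int" where
  "std_basis i = (\<lambda>j. if j = i then 1 else 0)"

definition word_len_Zn :: "nat \<Rightarrow> (nat \<Rightarrow> int) \<Rightarrow> nat" where
  "word_len_Zn n v = (\<Sum>i<n. nat \<bar>v i\<bar>)"

definition word_len_Z :: "int \<Rightarrow> nat" where
  "word_len_Z k = nat \<bar>k\<bar>"

text \<open>Group homomorphisms Z^n -> Z (only their values on Zn n matter).\<close>
definition is_hom_Zn_Z :: "nat \<Rightarrow> ((nat \<Rightarrow> int) \<Rightarrow> int) \<Rightarrow> bool" where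
  "is_hom_Zn_Z n \<phi> \<longleftrightarrow> (\<forall>u\<in>Zn n. \<forall>v\<in>Zn n. \<phi> (\<lambda>i. u i + v i) = \<phi> u + \<phi> v)"

definition discriminates_ball :: "nat \<Rightarrow> ((nat \<Rightarrow> int) \<Rightarrow> int) \<Rightarrow> nat \<Rightarrow> bool" where
  "discriminates_ball n \<phi> R \<longleftrightarrow>
     (\<forall>v\<in>Zn n. v \<noteq> (\<lambda>_. 0) \<and> word_len_Zn n v \<le> R \<longrightarrow> \<phi> v \<noteq> 0)"

definition hom_complexity :: "nat \<Rightarrow> ((nat \<Rightarrow> int) \<Rightarrow> int) \<Rightarrow> nat" where
  "hom_complexity n \<phi> = Max ((\<lambda>i. word_len_Z (\<phi> (std_basis i))) ` {..<n})"

definition disc_complexity :: "nat \<Rightarrow> nat \<Rightarrow> nat" where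
  "disc_complexity n R = (LEAST c. \<exists>\<phi>. is_hom_Zn_Z n \<phi> \<and> discriminates_ball n \<phi> R
                                        \<and> hom_complexity n \<phi> = c)"

definition asymp_le :: "(nat \<Rightarrow> nat) \<Rightarrow> (nat \<Rightarrow> nat) \<Rightarrow> bool" where
  "asymp_le f g \<longleftrightarrow> (\<exists>K. \<forall>R. f R \<le> K * g (K * R) + K)"

definition asymp_equiv :: "(nat \<Rightarrow> nat) \<Rightarrow> (nat \<Rightarrow> nat) \<Rightarrow> bool" where
  "asymp_equiv f g \<longleftrightarrow> asymp_le f g \<and> asymp_le g f"

end

theory Submission
  imports Defs "HOL-Library.FuncSet"
begin

text \<open>The radix homomorphism \<open>v \<mapsto> \<Sum>i<n. v i * (R + 1) ^ i\<close> discriminates the ball of radius R,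
  since a nonzero vector of length at most R is a nonzero string of signed base-(R+1) digits; its
  complexity is \<open>(R + 1) ^ (n - 1)\<close>. Conversely, a homomorphism \<open>\<phi>\<close> of complexity c is linear, so
  \<open>\<bar>\<phi> v\<bar> \<le> c * \<bar>v\<bar>\<close>. If it discriminates the ball of radius nR, it is injective on the box
  \<open>[0,R]^n\<close>, whose differences lie in that ball, and it maps the box into \<open>[-cnR, cnR]\<close>; counting
  gives \<open>(R + 1) ^ n \<le> 2cnR + 1\<close>, i.e. \<open>c \<ge> R ^ (n - 1) / 2n\<close>.\<close>

lemma Zn_add [simp]: "u \<in> Zn n \<Longrightarrow> v \<in> Zn n \<Longrightarrow> (\<lambda>i. u i + v i) \<in> Zn n"
  and Zn_diff [simp]: "u \<in> Zn n \<Longrightarrow> v \<in> Zn n \<Longrightarrow> (\<lambda>i. u i - v i) \<in> Zn n"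
  and Zn_scale [simp]: "u \<in> Zn n \<Longrightarrow> (\<lambda>i. k * u i) \<in> Zn n"
  and Zn_zero [simp]: "(\<lambda>_. 0) \<in> Zn n"
  and std_basis_in_Zn [simp]: "i < n \<Longrightarrow> std_basis i \<in> Zn n"
  by (simp_all add: Zn_def std_basis_def)

lemma Zn_sum:
  "finite I \<Longrightarrow> (\<And>i. i \<in> I \<Longrightarrow> f i \<in> Zn n) \<Longrightarrow> (\<lambda>j. \<Sum>i\<in>I. f i j) \<in> Zn n"
  by (simp add: Zn_def)

lemma hom_Zn_Z_add:
  "is_hom_Zn_Z n \<phi> \<Longrightarrow> u \<in> Zn n \<Longrightarrow> v \<in> Zn n \<Longrightarrow> \<phi> (\<lambda>i. u i + v i) = \<phi> u + \<phi> v"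
  by (simp add: is_hom_Zn_Z_def)

lemma hom_Zn_Z_zero: "is_hom_Zn_Z n \<phi> \<Longrightarrow> \<phi> (\<lambda>_. 0) = 0"
  using hom_Zn_Z_add[of n \<phi> "\<lambda>_. 0" "\<lambda>_. 0"] by simp

lemma hom_Zn_Z_scale:
  assumes hom: "is_hom_Zn_Z n \<phi>" and u: "u \<in> Zn n"
  shows "\<phi> (\<lambda>i. k * u i) = k * \<phi> u"
proof -
  have nat_scale: "\<phi> (\<lambda>i. int m * u i) = int m * \<phi> u" for m
  proof (induction m)
    case 0
    then show ?case using hom_Zn_Z_zero[OF hom] by simp
  next
    case (Suc m)
    have "\<phi> (\<lambda>i. int (Suc m) * u i) = \<phi> (\<lambda>i. int m * u i + u i)"
      by (simp add: algebra_simps)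
    also have "\<dots> = int m * \<phi> u + \<phi> u"
      using hom_Zn_Z_add[OF hom _ u, of "\<lambda>i. int m * u i"] u Suc.IH by simp
    finally show ?case by (simp add: algebra_simps)
  qed
  show ?thesis
  proof (cases k rule: int_cases2)
    case (nonneg m)
    then show ?thesis using nat_scale by simp
  next
    case (nonpos m)
    have "\<phi> (\<lambda>i. - int m * u i) + \<phi> (\<lambda>i. int m * u i) = \<phi> (\<lambda>_. 0)"
      using hom_Zn_Z_add[OF hom Zn_scale[OF u] Zn_scale[OF u], of "- int m" "int m"]
      by (simp add: algebra_simps)
    then show ?thesis using nonpos nat_scale hom_Zn_Z_zero[OF hom] by simp
  qed
qed

lemma hom_Zn_Z_sum:
  assumes hom: "is_hom_Zn_Z n \<phi>" and "finite I" and "\<And>i. i \<in> I \<Longrightarrow> f i \<in> Zn n"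
  shows "\<phi> (\<lambda>j. \<Sum>i\<in>I. f i j) = (\<Sum>i\<in>I. \<phi> (f i))"
  using assms(2,3)
proof (induction I rule: finite_induct)
  case empty
  then show ?case using hom_Zn_Z_zero[OF hom] by simp
next
  case (insert a I)
  have "\<phi> (\<lambda>j. \<Sum>i\<in>insert a I. f i j) = \<phi> (\<lambda>j. f a j + (\<Sum>i\<in>I. f i j))"
    using insert.hyps by simp
  also have "\<dots> = \<phi> (f a) + \<phi> (\<lambda>j. \<Sum>i\<in>I. f i j)"
    using insert by (intro hom_Zn_Z_add[OF hom] Zn_sum) auto
  finally show ?case using insert by simp
qed

lemma Zn_eq_sum_std_basis:
  assumes "v \<in> Zn n"
  shows "v = (\<lambda>j. \<Sum>i<n. v i * std_basis i j)"
proof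
  fix j
  show "v j = (\<Sum>i<n. v i * std_basis i j)"
    using assms by (cases "j < n") (auto simp: std_basis_def Zn_def if_distrib cong: if_cong)
qed

lemma hom_Zn_Z_eq_sum:
  assumes hom: "is_hom_Zn_Z n \<phi>" and v: "v \<in> Zn n"
  shows "\<phi> v = (\<Sum>i<n. v i * \<phi> (std_basis i))"
proof -
  have "\<phi> v = \<phi> (\<lambda>j. \<Sum>i<n. v i * std_basis i j)"
    using Zn_eq_sum_std_basis[OF v] by simp
  also have "\<dots> = (\<Sum>i<n. \<phi> (\<lambda>j. v i * std_basis i j))"
    by (rule hom_Zn_Z_sum[OF hom]) auto
  also have "\<dots> = (\<Sum>i<n. v i * \<phi> (std_basis i))"
    by (intro sum.cong refl hom_Zn_Z_scale[OF hom]) simp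
  finally show ?thesis .
qed

lemma abs_le_word_len_Zn: "i < n \<Longrightarrow> \<bar>v i\<bar> \<le> int (word_len_Zn n v)"
  unfolding word_len_Zn_def by (auto intro!: member_le_sum)

lemma abs_std_basis_le_hom_complexity:
  "i < n \<Longrightarrow> \<bar>\<phi> (std_basis i)\<bar> \<le> int (hom_complexity n \<phi>)"
proof -
  assume "i < n"
  then have "word_len_Z (\<phi> (std_basis i)) \<le> hom_complexity n \<phi>"
    unfolding hom_complexity_def by (intro Max_ge) auto
  then show ?thesis
    by (simp add: word_len_Z_def)
qed

lemma abs_hom_le_complexity_word_len:
  assumes hom: "is_hom_Zn_Z n \<phi>" and v: "v \<in> Zn n"
  shows "\<bar>\<phi> v\<bar> \<le> int (hom_complexity n \<phi>) * int (word_len_Zn n v)"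
proof -
  let ?c = "int (hom_complexity n \<phi>)"
  have "\<bar>\<phi> v\<bar> = \<bar>\<Sum>i<n. v i * \<phi> (std_basis i)\<bar>"
    using hom_Zn_Z_eq_sum[OF hom v] by simp
  also have "\<dots> \<le> (\<Sum>i<n. \<bar>v i\<bar> * \<bar>\<phi> (std_basis i)\<bar>)"
    by (rule order_trans[OF sum_abs]) (simp add: abs_mult)
  also have "\<dots> \<le> (\<Sum>i<n. \<bar>v i\<bar> * ?c)"
    by (intro sum_mono mult_left_mono abs_std_basis_le_hom_complexity) auto
  also have "\<dots> = ?c * int (word_len_Zn n v)"
    by (simp add: word_len_Zn_def sum_distrib_left mult.commute)
  finally show ?thesis .
qed

definition radix_hom :: "nat \<Rightarrow> int \<Rightarrow> (nat \<Rightarrow> int) \<Rightarrow> int" where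
  "radix_hom n B v = (\<Sum>i<n. v i * B ^ i)"

lemma abs_radix_hom_less:
  assumes "B > 0" "\<forall>i<k. \<bar>v i\<bar> < B"
  shows "\<bar>radix_hom k B v\<bar> < B ^ k"
  using assms(2)
proof (induction k)
  case 0
  then show ?case by (simp add: radix_hom_def)
next
  case (Suc k)
  have "\<bar>radix_hom (Suc k) B v\<bar> \<le> \<bar>radix_hom k B v\<bar> + \<bar>v k\<bar> * B ^ k"
    using assms(1) abs_triangle_ineq[of "radix_hom k B v" "v k * B ^ k"]
    by (simp add: radix_hom_def abs_mult)
  also have "\<dots> \<le> (B ^ k - 1) + (B - 1) * B ^ k"
    using Suc assms(1) by (intro add_mono mult_right_mono) auto
  also have "\<dots> < B ^ Suc k"
    by (simp add: algebra_simps)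
  finally show ?case .
qed

lemma radix_hom_eq_0_imp_digits_0:
  assumes "B > 0" "\<forall>i<k. \<bar>v i\<bar> < B" "radix_hom k B v = 0"
  shows "\<forall>i<k. v i = 0"
  using assms(2,3)
proof (induction k)
  case 0
  then show ?case by simp
next
  case (Suc k)
  have expand: "radix_hom k B v = - (v k * B ^ k)"
    using Suc.prems(2) by (simp add: radix_hom_def)
  have "\<bar>radix_hom k B v\<bar> < B ^ k"
    using Suc.prems(1) by (intro abs_radix_hom_less[OF assms(1)]) simp
  then have "\<bar>v k\<bar> * B ^ k < 1 * B ^ k"
    using expand assms(1) by (simp add: abs_mult)
  then have vk: "v k = 0"
    using assms(1) by (subst (asm) mult_less_cancel_right) simp
  have "\<forall>i<k. v i = 0"
    using Suc.prems expand vk by (intro Suc.IH) simp_all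
  with vk show ?case
    using less_Suc_eq by auto
qed

lemma radix_hom_is_hom: "is_hom_Zn_Z n (radix_hom n B)"
  by (simp add: is_hom_Zn_Z_def radix_hom_def algebra_simps sum.distrib)

lemma radix_hom_discriminates: "discriminates_ball n (radix_hom n (int R + 1)) R"
  unfolding discriminates_ball_def
proof (intro ballI impI notI)
  fix v
  assume v: "v \<in> Zn n" and small: "v \<noteq> (\<lambda>_. 0) \<and> word_len_Zn n v \<le> R"
    and zero: "radix_hom n (int R + 1) v = 0"
  have "\<bar>v i\<bar> < int R + 1" if "i < n" for i
    using abs_le_word_len_Zn[OF that, of v] small by simp
  then have low: "\<forall>i<n. v i = 0"
    by (intro radix_hom_eq_0_imp_digits_0[OF _ _ zero]) auto
  have "v i = 0" for i
    using low v by (cases "i < n") (auto simp: Zn_def)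
  then have "v = (\<lambda>_. 0)"
    by blast
  with small show False by simp
qed

lemma radix_hom_std_basis:
  assumes "i < n"
  shows "radix_hom n B (std_basis i) = B ^ i"
proof -
  have "radix_hom n B (std_basis i) = (\<Sum>j<n. if j = i then B ^ j else 0)"
    unfolding radix_hom_def std_basis_def by (intro sum.cong) auto
  then show ?thesis
    using assms by simp
qed

lemma hom_complexity_radix_hom:
  assumes "n \<ge> 1"
  shows "hom_complexity n (radix_hom n (int R + 1)) = (R + 1) ^ (n - 1)"
proof -
  have "nat (int R + 1) = R + 1"
    by simp
  then have "(\<lambda>i. word_len_Z (radix_hom n (int R + 1) (std_basis i))) ` {..<n} = (\<lambda>i. (R + 1) ^ i) ` {..<n}"
    by (intro image_cong refl) (simp add: radix_hom_std_basis word_len_Z_def nat_power_eq)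
  moreover have "Max ((\<lambda>i. (R + 1) ^ i) ` {..<n}) = (R + 1) ^ (n - 1)"
  proof (rule Max_eqI)
    show "(R + 1) ^ (n - 1) \<in> (\<lambda>i. (R + 1) ^ i) ` {..<n}"
      using assms by (intro image_eqI[of _ _ "n - 1"]) auto
  next
    fix y
    assume "y \<in> (\<lambda>i. (R + 1) ^ i) ` {..<n}"
    then obtain i where "i < n" "y = (R + 1) ^ i"
      by blast
    then show "y \<le> (R + 1) ^ (n - 1)"
      using power_increasing[of i "n - 1" "R + 1"] by simp
  qed simp
  ultimately show ?thesis
    by (simp add: hom_complexity_def)
qed

lemma disc_complexity_attained:
  "\<exists>\<phi>. is_hom_Zn_Z n \<phi> \<and> discriminates_ball n \<phi> R \<and> hom_complexity n \<phi> = disc_complexity n R"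
  unfolding disc_complexity_def
  by (rule LeastI_ex) (use radix_hom_is_hom radix_hom_discriminates in blast)

lemma disc_complexity_le:
  assumes "n \<ge> 1"
  shows "disc_complexity n R \<le> (R + 1) ^ (n - 1)"
  unfolding disc_complexity_def
  using radix_hom_is_hom radix_hom_discriminates hom_complexity_radix_hom[OF assms]
  by (intro Least_le) blast

definition digit_box :: "nat \<Rightarrow> nat \<Rightarrow> (nat \<Rightarrow> int) set" where
  "digit_box n R = {v \<in> Zn n. \<forall>i<n. 0 \<le> v i \<and> v i \<le> int R}"

lemma bij_betw_restrict_digit_box:
  "bij_betw (\<lambda>v. restrict v {..<n}) (digit_box n R) (\<Pi>\<^sub>E i\<in>{..<n}. {0..int R})"
proof -
  let ?ext = "\<lambda>f i. if i < n then f i else (0::int)"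
  have inv1: "\<forall>v\<in>digit_box n R. ?ext (restrict v {..<n}) = v"
    by (auto simp: digit_box_def Zn_def fun_eq_iff)
  have inv2: "\<forall>f\<in>\<Pi>\<^sub>E i\<in>{..<n}. {0..int R}. restrict (?ext f) {..<n} = f"
    by (auto simp: PiE_iff extensional_def fun_eq_iff)
  have img1: "restrict v {..<n} \<in> (\<Pi>\<^sub>E i\<in>{..<n}. {0..int R})" if "v \<in> digit_box n R" for v
    using that by (subst restrict_PiE_iff) (simp add: digit_box_def)
  have img2: "?ext f \<in> digit_box n R" if "f \<in> (\<Pi>\<^sub>E i\<in>{..<n}. {0..int R})" for f
    using PiE_mem[OF that] by (simp add: digit_box_def Zn_def)
  show ?thesis
    by (rule bij_betw_byWitness[where f = "\<lambda>v. restrict v {..<n}" and f' = ?ext, OF inv1 inv2])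
      (use img1 img2 in blast)+
qed

lemma card_digit_box: "card (digit_box n R) = (R + 1) ^ n"
proof -
  have "nat (int R + 1) = R + 1"
    by simp
  then show ?thesis
    using bij_betw_same_card[OF bij_betw_restrict_digit_box] by (simp add: card_PiE)
qed

lemma word_len_Zn_le: "(\<And>i. i < n \<Longrightarrow> \<bar>v i\<bar> \<le> int R) \<Longrightarrow> word_len_Zn n v \<le> n * R"
  unfolding word_len_Zn_def
  using sum_mono[of "{..<n}" "\<lambda>i. nat \<bar>v i\<bar>" "\<lambda>_. R"] by fastforce

lemma hom_complexity_lower_bound:
  assumes hom: "is_hom_Zn_Z n \<phi>" and disc: "discriminates_ball n \<phi> (n * R)"
  shows "(R + 1) ^ n \<le> 2 * hom_complexity n \<phi> * n * R + 1"
proof -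
  define N where "N = int (hom_complexity n \<phi>) * int (n * R)"
  have inj: "inj_on \<phi> (digit_box n R)"
  proof (rule inj_onI, rule ccontr)
    fix u w
    assume u: "u \<in> digit_box n R" and w: "w \<in> digit_box n R"
      and eq: "\<phi> u = \<phi> w" and "u \<noteq> w"
    define d where "d = (\<lambda>i. u i - w i)"
    have d: "d \<in> Zn n" "d \<noteq> (\<lambda>_. 0)"
      using u w \<open>u \<noteq> w\<close> by (auto simp: d_def digit_box_def fun_eq_iff)
    have "word_len_Zn n d \<le> n * R"
      using u w by (intro word_len_Zn_le) (force simp: d_def digit_box_def)
    then have "\<phi> d \<noteq> 0"
      using disc d unfolding discriminates_ball_def by blast
    moreover have "\<phi> u = \<phi> d + \<phi> w"
      using hom_Zn_Z_add[OF hom d(1), of w] w by (simp add: d_def digit_box_def)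
    ultimately show False
      using eq by simp
  qed
  have "\<phi> ` digit_box n R \<subseteq> {-N..N}"
  proof
    fix y
    assume "y \<in> \<phi> ` digit_box n R"
    then obtain v where v: "v \<in> digit_box n R" "y = \<phi> v"
      by blast
    have "word_len_Zn n v \<le> n * R"
      using v(1) by (intro word_len_Zn_le) (simp add: digit_box_def)
    have "\<bar>\<phi> v\<bar> \<le> int (hom_complexity n \<phi>) * int (word_len_Zn n v)"
      using abs_hom_le_complexity_word_len[OF hom] v(1) by (simp add: digit_box_def)
    also have "\<dots> \<le> N"
      unfolding N_def using \<open>word_len_Zn n v \<le> n * R\<close> by (intro mult_left_mono) (simp_all flip: of_nat_mult)
    finally show "y \<in> {-N..N}"
      using v(2) by auto
  qed
  then have "card (digit_box n R) \<le> card {-N..N}"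
    using inj by (intro card_inj_on_le) auto
  then show ?thesis
    by (simp add: card_digit_box N_def nat_add_distrib nat_mult_distrib ac_simps)
qed

lemma discriminates_ball_mono:
  "discriminates_ball n \<phi> R' \<Longrightarrow> R \<le> R' \<Longrightarrow> discriminates_ball n \<phi> R"
  by (auto simp: discriminates_ball_def)

lemma power_add_one_le_add_one_power:
  fixes R :: nat
  assumes "m \<ge> 1"
  shows "R ^ m + 1 \<le> (R + 1) ^ m"
  using assms
proof (induction m rule: dec_induct)
  case (step m)
  have "R ^ Suc m + 1 \<le> (R ^ m + 1) * (R + 1)"
    by (simp add: algebra_simps)
  also have "\<dots> \<le> (R + 1) ^ m * (R + 1)"
    using step.IH by (rule mult_right_mono) simp
  also have "\<dots> = (R + 1) ^ Suc m"
    by (simp add: mult.commute)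
  finally show ?case .
qed simp

lemma power_le_disc_complexity:
  assumes "n \<ge> 1"
  shows "R ^ (n - 1) \<le> 2 * n * disc_complexity n (2 * n * R) + 2 * n"
proof -
  obtain \<phi> where hom: "is_hom_Zn_Z n \<phi>" and disc: "discriminates_ball n \<phi> (2 * n * R)"
    and c: "hom_complexity n \<phi> = disc_complexity n (2 * n * R)"
    using disc_complexity_attained by blast
  let ?c = "disc_complexity n (2 * n * R)"
  have "R ^ (n - 1) * R + 1 \<le> (R + 1) ^ n"
    using power_add_one_le_add_one_power[OF assms, of R] power_minus_mult[of n R] assms by simp
  also have "\<dots> \<le> 2 * ?c * n * R + 1"
    using hom_complexity_lower_bound[OF hom discriminates_ball_mono[OF disc]] c by simp
  finally have "R ^ (n - 1) * R \<le> (2 * n * ?c) * R"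
    by (simp add: ac_simps)
  then show ?thesis
    using assms by (cases "R = 0") (auto simp: power_0_left)
qed

lemma add_one_power_le_double_power: "(R + 1) ^ m \<le> (2 * R) ^ m + (1::nat)"
proof (cases "R = 0")
  case False
  then have "(R + 1) ^ m \<le> (2 * R) ^ m"
    by (intro power_mono) auto
  then show ?thesis by simp
qed (simp add: power_0_left)

theorem theoremB:
  fixes n :: nat
  assumes "n \<ge> 1"
  shows "asymp_equiv (disc_complexity n) (\<lambda>R. R ^ (n - 1))"
  unfolding asymp_equiv_def asymp_le_def
proof
  have "disc_complexity n R \<le> 2 * (2 * R) ^ (n - 1) + 2" for R
    using disc_complexity_le[OF assms, of R] add_one_power_le_double_power[of R "n - 1"] by simp
  then show "\<exists>K. \<forall>R. disc_complexity n R \<le> K * (K * R) ^ (n - 1) + K"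
    by blast
  show "\<exists>K. \<forall>R. R ^ (n - 1) \<le> K * disc_complexity n (K * R) + K"
    using power_le_disc_complexity[OF assms] by blast
qed

end
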